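(* Let $\mathcal R$ be a commutative ring with unit, $L\in\mathbb N$ and $\vec m=(m_0,\dots,m_L)\in\mathcal R^{L+1}$. Then ${}_{\vec m}\mathcal H=({}_{\vec m}\mathcal H_n)_{n\ge0}$ satisfies the homotopy axiom if and only if the ideal of $\mathcal R$ generated by $\{m_0,\dots,m_L\}$ is all of $\mathcal R$ (i.e. there are $r_0,\dots,r_L\in\mathcal R$ with $\sum_k r_km_k=1_{\mathcal R}$). In particular, for $\mathcal R=\mathbb Z$ the homotopy axiom holds iff $\gcd(m_0,\dots,m_L)=1$.
   Context: For a space $X$: $\mathcal S_n(X)$ = continuous maps $[0,1]^n\to X$ ($[0,1]^0=\{0\}$), $\mathcal K_n(X)$ the free $\mathcal R$-module on $\mathcal S_n(X)$, $\mathcal K_{-1}(X)=0$. For $n\ge1$, $T\in\mathcal S_n(X)$, $0\le i\le L$, $1\le j\le n$: $\langle T\rangle_{n,i,j}(x_1,\dots,x_{n-1})=T(x_1,\dots,x_{j-1},i/L,x_j,\dots,x_{n-1})$ (for $n=1$: $\langle T\rangle_{1,i,1}(0)=T(i/L)$). ${}_{\vec m}\partial_n(T)=\sum_{j=1}^n(-1)^{j+1}\sum_{i=0}^Lm_i\langle T\rangle_{n,i,j}$, extended linearly, ${}_{\vec m}\partial_0=0$; this is a chain complex and ${}_{\vec m}\mathcal H_n(X)=\ker{}_{\vec m}\partial_n/\operatorname{im}{}_{\vec m}\partial_{n+1}$, a functor of $X$ via $\mathcal K_n(f)(T)=f\circ T$. The homotopy axiom means: for all homotopic continuous $f\simeq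 g:X\to Y$, ${}_{\vec m}\mathcal H_n(f)={}_{\vec m}\mathcal H_n(g)$ for all $n\ge0$. *)

theory Defs
  imports "HOL-Analysis.Analysis"
begin

text \<open>Points of the cube [0,1]^n are encoded as
  functions nat => real whose coordinates 0..n-1 lie in [0,1] and all others are 0
  (coordinate x_k of the paper is the value at k-1). [0,1]^0 is the single point (%i. 0).\<close>

definition unit_cube :: "nat \<Rightarrow> (nat \<Rightarrow> real) set" where
  "unit_cube n = {x. (\<forall>i<n. 0 \<le> x i \<and> x i \<le> 1) \<and> (\<forall>i\<ge>n. x i = 0)}"

text \<open>Singular n-cubes S_n(X): continuous maps [0,1]^n -> X (made extensional, so that
  each map is represented by exactly one HOL function).\<close>
definition sing_cube :: "nat \<Rightarrow> 'a topology \<Rightarrow> ((nat \<Rightarrow> real) \<Rightarrow> 'a) \<Rightarrow> bool" where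
  "sing_cube n X T \<longleftrightarrow>
     continuous_map (subtopology (powertop_real UNIV) (unit_cube n)) X T \<and>
     T \<in> extensional (unit_cube n)"

text \<open>Chains K_n(X): elements of the free R-module on S_n(X), i.e. finitely supported
  coefficient functions on S_n(X).\<close>
definition chain :: "nat \<Rightarrow> 'a topology \<Rightarrow> (((nat \<Rightarrow> real) \<Rightarrow> 'a) \<Rightarrow> 'r::comm_ring_1) \<Rightarrow> bool" where
  "chain n X c \<longleftrightarrow> finite {T. c T \<noteq> 0} \<and> (\<forall>T. c T \<noteq> 0 \<longrightarrow> sing_cube n X T)"

text \<open>Face <T>_{n,i,j} (1 <= j <= n, 0 <= i <= L): insert i/L as j-th coordinate.\<close>
definition face :: "nat \<Rightarrow> nat \<Rightarrow> nat \<Rightarrow> nat \<Rightarrow> ((nat \<Rightarrow> real) \<Rightarrow> 'a) \<Rightarrow> ((nat \<Rightarrow> real) \<Rightarrow> 'a)" where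
  "face L n i j T = (\<lambda>x. if x \<in> unit_cube (n - 1) then
       T (\<lambda>k. if k < j - 1 then x k else if k = j - 1 then real i / real L else x (k - 1))
     else undefined)"

definition cube_bd :: "nat \<Rightarrow> (nat \<Rightarrow> 'r::comm_ring_1) \<Rightarrow> nat \<Rightarrow> ((nat \<Rightarrow> real) \<Rightarrow> 'a)
    \<Rightarrow> ((nat \<Rightarrow> real) \<Rightarrow> 'a) \<Rightarrow> 'r" where
  "cube_bd L m n T = (\<lambda>S. \<Sum>j\<in>{1..n}. \<Sum>i\<in>{0..L}.
       (- 1) ^ (j + 1) * m i * (if face L n i j T = S then 1 else 0))"

definition chain_bd :: "nat \<Rightarrow> (nat \<Rightarrow> 'r::comm_ring_1) \<Rightarrow> nat
    \<Rightarrow> (((nat \<Rightarrow> real) \<Rightarrow> 'a) \<Rightarrow> 'r) \<Rightarrow> (((nat \<Rightarrow> real) \<Rightarrow> 'a) \<Rightarrow> 'r)" where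
  "chain_bd L m n c = (if n = 0 then (\<lambda>S. 0) else
       (\<lambda>S. \<Sum>T\<in>{T. c T \<noteq> 0}. c T * cube_bd L m n T S))"

definition cycles :: "nat \<Rightarrow> (nat \<Rightarrow> 'r::comm_ring_1) \<Rightarrow> nat \<Rightarrow> 'a topology
    \<Rightarrow> (((nat \<Rightarrow> real) \<Rightarrow> 'a) \<Rightarrow> 'r) set" where
  "cycles L m n X = {c. chain n X c \<and> chain_bd L m n c = (\<lambda>S. 0)}"

definition boundaries :: "nat \<Rightarrow> (nat \<Rightarrow> 'r::comm_ring_1) \<Rightarrow> nat \<Rightarrow> 'a topology
    \<Rightarrow> (((nat \<Rightarrow> real) \<Rightarrow> 'a) \<Rightarrow> 'r) set" where
  "boundaries L m n X = {chain_bd L m (Suc n) c | c. chain (Suc n) X c}"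

definition hclass :: "nat \<Rightarrow> (nat \<Rightarrow> 'r::comm_ring_1) \<Rightarrow> nat \<Rightarrow> 'a topology
    \<Rightarrow> (((nat \<Rightarrow> real) \<Rightarrow> 'a) \<Rightarrow> 'r) \<Rightarrow> (((nat \<Rightarrow> real) \<Rightarrow> 'a) \<Rightarrow> 'r) set" where
  "hclass L m n X z = {(\<lambda>S. z S + b S) | b. b \<in> boundaries L m n X}"

definition homology :: "nat \<Rightarrow> (nat \<Rightarrow> 'r::comm_ring_1) \<Rightarrow> nat \<Rightarrow> 'a topology
    \<Rightarrow> (((nat \<Rightarrow> real) \<Rightarrow> 'a) \<Rightarrow> 'r) set set" where
  "homology L m n X = hclass L m n X ` cycles L m n X"

definition chain_map :: "nat \<Rightarrow> ('a \<Rightarrow> 'b) \<Rightarrow> (((nat \<Rightarrow> real) \<Rightarrow> 'a) \<Rightarrow> 'r::comm_ring_1)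
    \<Rightarrow> (((nat \<Rightarrow> real) \<Rightarrow> 'b) \<Rightarrow> 'r)" where
  "chain_map n f c = (\<lambda>S. \<Sum>T\<in>{T. c T \<noteq> 0 \<and> restrict (f \<circ> T) (unit_cube n) = S}. c T)"

definition hom_map :: "nat \<Rightarrow> (nat \<Rightarrow> 'r::comm_ring_1) \<Rightarrow> nat \<Rightarrow> 'b topology \<Rightarrow> ('a \<Rightarrow> 'b)
    \<Rightarrow> (((nat \<Rightarrow> real) \<Rightarrow> 'a) \<Rightarrow> 'r) set \<Rightarrow> (((nat \<Rightarrow> real) \<Rightarrow> 'b) \<Rightarrow> 'r) set" where
  "hom_map L m n Y f C = hclass L m n Y (chain_map n f (SOME z. z \<in> C))"

definition homotopy_axiom :: "'a itself \<Rightarrow> 'b itself \<Rightarrow> nat \<Rightarrow> (nat \<Rightarrow> 'r::comm_ring_1) \<Rightarrow> bool" where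
  "homotopy_axiom _ _ L m \<longleftrightarrow>
     (\<forall>(X::'a topology) (Y::'b topology) f g. homotopic_with (\<lambda>_. True) X Y f g \<longrightarrow>
        (\<forall>n. \<forall>C\<in>homology L m n X. hom_map L m n Y f C = hom_map L m n Y g C))"

end

theory Submission
  imports Defs
begin

text \<open>
  For a homotopy H from f to g and a parameter change s : [0,1] \<rightarrow> [0,1], the prism
  (x, t) \<mapsto> H (s t, T x) over each cube T of a cycle z has boundary
  \<plusminus> \<Sum>i m_i H(s(i/L), -)_* z, because the faces transverse to t cancel against the
  boundary of z. Taking s \<equiv> 0 and s a tent function with peak k/L and subtracting,
  m_k (g_* z - f_* z) is a boundary for every k; hence so is g_* z - f_* z when
  \<Sum>k r_k m_k = 1.
  Conversely every coefficient of a boundary lies in the ideal generated by the m_k.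
  The constant maps 0 and 1 of \<real> are homotopic; comparing their images of the class
  of the constant 0-cube at 0 gives 1 + (element of the ideal) in the ideal.
\<close>

section \<open>Linear extension to chains\<close>

definition lin_ext :: "('c \<Rightarrow> 'd \<Rightarrow> 'r::comm_ring_1) \<Rightarrow> ('c \<Rightarrow> 'r) \<Rightarrow> 'd \<Rightarrow> 'r" where
  "lin_ext \<Phi> c = (\<lambda>S. \<Sum>T\<in>{T. c T \<noteq> 0}. c T * \<Phi> T S)"

definition unit_chain :: "'c \<Rightarrow> 'c \<Rightarrow> 'r::comm_ring_1" where
  "unit_chain U = (\<lambda>S. if U = S then 1 else 0)"

lemma lin_ext_eq_sum:
  assumes "finite F" "{T. c T \<noteq> 0} \<subseteq> F"
  shows "lin_ext \<Phi> c S = (\<Sum>T\<in>F. c T * \<Phi> T S)"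
  unfolding lin_ext_def using assms by (intro sum.mono_neutral_left) auto

lemma support_lin_ext: "{S. lin_ext \<Phi> c S \<noteq> 0} \<subseteq> (\<Union>T\<in>{T. c T \<noteq> 0}. {S. \<Phi> T S \<noteq> 0})"
proof
  fix S assume "S \<in> {S. lin_ext \<Phi> c S \<noteq> 0}"
  then obtain T where "c T \<noteq> 0" "c T * \<Phi> T S \<noteq> 0"
    unfolding lin_ext_def by (auto elim: sum.not_neutral_contains_not_neutral)
  then show "S \<in> (\<Union>T\<in>{T. c T \<noteq> 0}. {S. \<Phi> T S \<noteq> 0})" by auto
qed

lemma finite_support_lin_ext:
  assumes "finite {T. c T \<noteq> 0}" "\<And>T. c T \<noteq> 0 \<Longrightarrow> finite {S. \<Phi> T S \<noteq> 0}"
  shows "finite {S. lin_ext \<Phi> c S \<noteq> 0}"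
  using assms by (intro finite_subset[OF support_lin_ext]) auto

lemma finite_support_unit_chain [simp]: "finite {S. unit_chain U S \<noteq> 0}"
  by (rule finite_subset[of _ "{U}"]) (auto simp: unit_chain_def)

lemma lin_ext_unit_chain [simp]: "lin_ext \<Phi> (unit_chain U) = \<Phi> U"
proof
  fix S
  have "lin_ext \<Phi> (unit_chain U) S = (\<Sum>T\<in>{U}. unit_chain U T * \<Phi> T S)"
    by (rule lin_ext_eq_sum) (auto simp: unit_chain_def)
  then show "lin_ext \<Phi> (unit_chain U) S = \<Phi> U S" by (simp add: unit_chain_def)
qed

lemma lin_ext_zero [simp]: "lin_ext \<Phi> (\<lambda>T. 0) = (\<lambda>S. 0)"
  by (simp add: lin_ext_def)

lemma lin_ext_cong: "(\<And>T. c T \<noteq> 0 \<Longrightarrow> \<Phi> T = \<Psi> T) \<Longrightarrow> lin_ext \<Phi> c = lin_ext \<Psi> c"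
  unfolding lin_ext_def by (intro ext sum.cong) auto

lemma lin_ext_add_fun: "lin_ext (\<lambda>T S. \<Phi> T S + \<Psi> T S) c S = lin_ext \<Phi> c S + lin_ext \<Psi> c S"
  unfolding lin_ext_def by (simp add: distrib_left sum.distrib)

lemma lin_ext_lincomb:
  assumes "finite {T. c T \<noteq> 0}" "finite {T. d T \<noteq> 0}"
  shows "lin_ext \<Phi> (\<lambda>T. a * c T + d T) S = a * lin_ext \<Phi> c S + lin_ext \<Phi> d S"
proof -
  let ?F = "{T. c T \<noteq> 0} \<union> {T. d T \<noteq> 0}"
  have F: "finite ?F" using assms by simp
  have "lin_ext \<Phi> (\<lambda>T. a * c T + d T) S = (\<Sum>T\<in>?F. (a * c T + d T) * \<Phi> T S)"
    by (rule lin_ext_eq_sum[OF F]) auto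
  moreover have "lin_ext \<Phi> c S = (\<Sum>T\<in>?F. c T * \<Phi> T S)"
    by (rule lin_ext_eq_sum[OF F]) auto
  moreover have "lin_ext \<Phi> d S = (\<Sum>T\<in>?F. d T * \<Phi> T S)"
    by (rule lin_ext_eq_sum[OF F]) auto
  ultimately show ?thesis
    by (simp add: distrib_right sum.distrib sum_distrib_left mult.assoc)
qed

lemma lin_ext_lin_ext:
  assumes fc: "finite {T. c T \<noteq> 0}" and f\<Psi>: "\<And>T. c T \<noteq> 0 \<Longrightarrow> finite {S. \<Psi> T S \<noteq> 0}"
  shows "lin_ext \<Phi> (lin_ext \<Psi> c) = lin_ext (\<lambda>T. lin_ext \<Phi> (\<Psi> T)) c"
proof
  fix S
  define F where "F = {T. c T \<noteq> 0}"
  define G where "G = (\<Union>T\<in>F. {S. \<Psi> T S \<noteq> 0})"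
  have "finite G" using fc f\<Psi> by (auto simp: G_def F_def)
  have "lin_ext \<Phi> (lin_ext \<Psi> c) S = (\<Sum>U\<in>G. lin_ext \<Psi> c U * \<Phi> U S)"
    using \<open>finite G\<close> support_lin_ext[of \<Psi> c] by (intro lin_ext_eq_sum) (auto simp: G_def F_def)
  also have "\<dots> = (\<Sum>U\<in>G. (\<Sum>T\<in>F. c T * \<Psi> T U) * \<Phi> U S)"
    by (simp add: lin_ext_def F_def)
  also have "\<dots> = (\<Sum>T\<in>F. c T * (\<Sum>U\<in>G. \<Psi> T U * \<Phi> U S))"
    by (simp add: sum_distrib_left sum_distrib_right sum.swap[of _ G] mult.assoc)
  also have "\<dots> = (\<Sum>T\<in>F. c T * lin_ext \<Phi> (\<Psi> T) S)"
  proof (rule sum.cong[OF refl])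
    fix T assume "T \<in> F"
    then have "lin_ext \<Phi> (\<Psi> T) S = (\<Sum>U\<in>G. \<Psi> T U * \<Phi> U S)"
      using \<open>finite G\<close> by (intro lin_ext_eq_sum) (auto simp: G_def)
    then show "c T * (\<Sum>U\<in>G. \<Psi> T U * \<Phi> U S) = c T * lin_ext \<Phi> (\<Psi> T) S" by simp
  qed
  also have "\<dots> = lin_ext (\<lambda>T. lin_ext \<Phi> (\<Psi> T)) c S"
    by (simp add: lin_ext_def F_def)
  finally show "lin_ext \<Phi> (lin_ext \<Psi> c) S = lin_ext (\<lambda>T. lin_ext \<Phi> (\<Psi> T)) c S" .
qed

lemma support_cube_bd:
  "{S. cube_bd L m n T S \<noteq> 0} \<subseteq> (\<lambda>(j, i). face L n i j T) ` ({1..n} \<times> {0..L})"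
  unfolding cube_bd_def by (force elim!: sum.not_neutral_contains_not_neutral split: if_splits)

lemma finite_support_cube_bd: "finite {S. cube_bd L m n T S \<noteq> 0}"
  by (rule finite_subset[OF support_cube_bd]) simp

lemma lin_ext_cube_bd:
  "lin_ext \<Phi> (cube_bd L m n T) S =
     (\<Sum>j\<in>{1..n}. \<Sum>i\<in>{0..L}. (- 1) ^ (j + 1) * m i * \<Phi> (face L n i j T) S)"
proof -
  define F where "F = (\<lambda>(j, i). face L n i j T) ` ({1..n} \<times> {0..L})"
  have "lin_ext \<Phi> (cube_bd L m n T) S = (\<Sum>U\<in>F. cube_bd L m n T U * \<Phi> U S)"
    unfolding F_def by (rule lin_ext_eq_sum[OF _ support_cube_bd]) simp
  also have "\<dots> = (\<Sum>U\<in>F. \<Sum>j\<in>{1..n}. \<Sum>i\<in>{0..L}.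
                      if face L n i j T = U then (- 1) ^ (j + 1) * m i * \<Phi> U S else 0)"
    by (auto simp: cube_bd_def sum_distrib_right intro!: sum.cong)
  also have "\<dots> = (\<Sum>j\<in>{1..n}. \<Sum>i\<in>{0..L}. \<Sum>U\<in>F.
                      if face L n i j T = U then (- 1) ^ (j + 1) * m i * \<Phi> U S else 0)"
    by (subst sum.swap) (rule sum.cong[OF refl], rule sum.swap)
  also have "\<dots> = (\<Sum>j\<in>{1..n}. \<Sum>i\<in>{0..L}. (- 1) ^ (j + 1) * m i * \<Phi> (face L n i j T) S)"
    by (intro sum.cong refl) (force simp: F_def sum.delta)
  finally show ?thesis .
qed

lemma chain_bd_eq_lin_ext: "chain_bd L m n c = lin_ext (cube_bd L m n) c"
proof (cases n)
  case 0
  then show ?thesis by (simp add: chain_bd_def lin_ext_def cube_bd_def)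
qed (simp add: chain_bd_def lin_ext_def)

section \<open>Images and prisms of singular cubes\<close>

definition push_cube :: "nat \<Rightarrow> ('a \<Rightarrow> 'b) \<Rightarrow> ((nat \<Rightarrow> real) \<Rightarrow> 'a) \<Rightarrow> (nat \<Rightarrow> real) \<Rightarrow> 'b" where
  "push_cube n f T = restrict (f \<circ> T) (unit_cube n)"

lemma chain_map_eq_lin_ext:
  assumes "finite {T. c T \<noteq> 0}"
  shows "chain_map n f c = lin_ext (\<lambda>T. unit_chain (push_cube n f T)) c"
proof
  fix S
  have "chain_map n f c S = (\<Sum>T\<in>{T\<in>{T. c T \<noteq> 0}. push_cube n f T = S}. c T)"
    by (simp add: chain_map_def push_cube_def)
  also have "\<dots> = (\<Sum>T\<in>{T. c T \<noteq> 0}. if push_cube n f T = S then c T else 0)"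
    using assms by (rule sum.inter_filter)
  also have "\<dots> = lin_ext (\<lambda>T. unit_chain (push_cube n f T)) c S"
    unfolding lin_ext_def unit_chain_def by (intro sum.cong) auto
  finally show "chain_map n f c S = lin_ext (\<lambda>T. unit_chain (push_cube n f T)) c S" .
qed

lemma chain_map_unit_chain: "chain_map n f (unit_chain U) = unit_chain (push_cube n f U)"
  by (simp add: chain_map_eq_lin_ext)

lemma chain_map_add:
  assumes "finite {T. c T \<noteq> 0}" "finite {T. d T \<noteq> 0}"
  shows "chain_map n f (\<lambda>T. c T + d T) S = chain_map n f c S + chain_map n f d S"
proof -
  have "finite {T. c T + d T \<noteq> 0}"
    by (rule finite_subset[of _ "{T. c T \<noteq> 0} \<union> {T. d T \<noteq> 0}"]) (use assms in auto)
  then show ?thesis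
    using lin_ext_lincomb[OF assms, of _ 1 S] by (simp add: chain_map_eq_lin_ext assms)
qed

lemma chain_map_const:
  "chain_map n (\<lambda>_. y) c (restrict (\<lambda>_. y) (unit_cube n)) = (\<Sum>T\<in>{T. c T \<noteq> 0}. c T)"
  by (simp add: chain_map_def o_def)

lemma chain_map_outside_image:
  "(\<And>T. push_cube n f T \<noteq> S) \<Longrightarrow> chain_map n f c S = 0"
  by (simp add: chain_map_def push_cube_def)

lemma of_nat_div_bounds: "i \<le> L \<Longrightarrow> 0 \<le> real i / real L \<and> real i / real L \<le> 1"
  by (cases "L = 0") (auto simp: divide_le_eq_1)

lemma insert_coord_in_unit_cube:
  assumes "x \<in> unit_cube (n - 1)" "1 \<le> j" "j \<le> n" "0 \<le> t" "t \<le> 1"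
  shows "(\<lambda>k. if k < j - 1 then x k else if k = j - 1 then t else x (k - 1)) \<in> unit_cube n"
  using assms unfolding unit_cube_def by auto

lemma face_push_cube:
  assumes "1 \<le> j" "j \<le> n" "i \<le> L"
  shows "face L n i j (push_cube n f T) = push_cube (n - 1) f (face L n i j T)"
proof
  fix x
  show "face L n i j (push_cube n f T) x = push_cube (n - 1) f (face L n i j T) x"
  proof (cases "x \<in> unit_cube (n - 1)")
    case True
    then show ?thesis
      using insert_coord_in_unit_cube[OF True assms(1,2)] of_nat_div_bounds[OF assms(3)]
      by (simp add: face_def push_cube_def)
  qed (simp add: face_def push_cube_def)
qed

definition cube_proj :: "nat \<Rightarrow> (nat \<Rightarrow> real) \<Rightarrow> nat \<Rightarrow> real" where
  "cube_proj n x = (\<lambda>k. if k < n then x k else 0)"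

definition prism_cube :: "nat \<Rightarrow> (real \<times> 'a \<Rightarrow> 'b) \<Rightarrow> (real \<Rightarrow> real) \<Rightarrow> ((nat \<Rightarrow> real) \<Rightarrow> 'a)
    \<Rightarrow> (nat \<Rightarrow> real) \<Rightarrow> 'b" where
  "prism_cube n H s T = restrict (\<lambda>x. H (s (x n), T (cube_proj n x))) (unit_cube (Suc n))"

lemma face_prism_cube:
  assumes "1 \<le> j" "j \<le> n" "i \<le> L"
  shows "face L (Suc n) i j (prism_cube n H s T) = prism_cube (n - 1) H s (face L n i j T)"
proof
  fix x
  have n: "Suc (n - 1) = n" using assms by simp
  show "face L (Suc n) i j (prism_cube n H s T) x = prism_cube (n - 1) H s (face L n i j T) x"
  proof (cases "x \<in> unit_cube n")
    case True
    let ?y = "\<lambda>k. if k < j - 1 then x k else if k = j - 1 then real i / real L else x (k - 1)"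
    have "?y \<in> unit_cube (Suc n)"
      using insert_coord_in_unit_cube[of x "Suc n" j] True assms of_nat_div_bounds[OF assms(3)] by simp
    moreover have "cube_proj (n - 1) x \<in> unit_cube (n - 1)"
      using True unfolding unit_cube_def cube_proj_def by auto
    moreover have "cube_proj n ?y = (\<lambda>k. if k < j - 1 then cube_proj (n - 1) x k
        else if k = j - 1 then real i / real L else cube_proj (n - 1) x (k - 1))"
      using assms True unfolding cube_proj_def unit_cube_def by (auto intro!: ext)
    moreover have "?y n = x (n - 1)"
      using assms by auto
    ultimately show ?thesis
      using True n by (simp add: face_def prism_cube_def del: One_nat_def)
  qed (use n in \<open>simp add: face_def prism_cube_def del: One_nat_def\<close>)
qed

lemma face_prism_cube_last:
  assumes "i \<le> L"
  shows "face L (Suc n) i (Suc n) (prism_cube n H s T) = push_cube n (\<lambda>y. H (s (real i / real L), y)) T"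
proof
  fix x
  show "face L (Suc n) i (Suc n) (prism_cube n H s T) x = push_cube n (\<lambda>y. H (s (real i / real L), y)) T x"
  proof (cases "x \<in> unit_cube n")
    case True
    let ?y = "\<lambda>k. if k < Suc n - 1 then x k else if k = Suc n - 1 then real i / real L else x (k - 1)"
    have "?y \<in> unit_cube (Suc n)"
      using insert_coord_in_unit_cube[of x "Suc n" "Suc n"] True of_nat_div_bounds[OF assms] by simp
    moreover have "cube_proj n ?y = x"
      using True unfolding cube_proj_def unit_cube_def by (auto intro!: ext)
    ultimately show ?thesis
      using True by (simp add: face_def prism_cube_def push_cube_def)
  qed (simp add: face_def prism_cube_def push_cube_def)
qed

lemma sing_cube_push_cube:
  assumes "continuous_map X Y f" "sing_cube n X T"
  shows "sing_cube n Y (push_cube n f T)"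
proof -
  have "continuous_map (subtopology (powertop_real UNIV) (unit_cube n)) Y (f \<circ> T)"
    using assms continuous_map_compose unfolding sing_cube_def by blast
  then show ?thesis unfolding sing_cube_def push_cube_def by simp
qed

lemma continuous_map_cube_proj:
  "continuous_map (subtopology (powertop_real UNIV) (unit_cube (Suc n)))
     (subtopology (powertop_real UNIV) (unit_cube n)) (cube_proj n)"
proof (rule continuous_map_into_subtopology)
  show "continuous_map (subtopology (powertop_real UNIV) (unit_cube (Suc n))) (powertop_real UNIV) (cube_proj n)"
    unfolding continuous_map_componentwise_UNIV cube_proj_def
  proof
    fix k
    show "continuous_map (subtopology (powertop_real UNIV) (unit_cube (Suc n))) euclideanreal
        (\<lambda>x. if k < n then x k else 0)"
      by (cases "k < n") (auto intro: continuous_map_from_subtopology continuous_map_product_projection)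
  qed
  show "cube_proj n \<in> topspace (subtopology (powertop_real UNIV) (unit_cube (Suc n))) \<rightarrow> unit_cube n"
    by (auto simp: cube_proj_def unit_cube_def)
qed

lemma sing_cube_prism_cube:
  assumes T: "sing_cube n X T" and H: "continuous_map (prod_topology (top_of_set {0..1}) X) Y H"
    and s: "continuous_map euclideanreal euclideanreal s" "\<And>t. s t \<in> {0..1}"
  shows "sing_cube (Suc n) Y (prism_cube n H s T)"
proof -
  let ?C = "subtopology (powertop_real UNIV) (unit_cube (Suc n))"
  have "continuous_map ?C euclideanreal (\<lambda>x. x n)"
    by (auto intro: continuous_map_from_subtopology continuous_map_product_projection)
  then have "continuous_map ?C (top_of_set {0..1}) (\<lambda>x. s (x n))"
    using continuous_map_compose[OF _ s(1)] s(2) by (intro continuous_map_into_subtopology) (auto simp: o_def)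
  moreover have "continuous_map ?C X (\<lambda>x. T (cube_proj n x))"
    using continuous_map_compose[OF continuous_map_cube_proj] T unfolding sing_cube_def by (auto simp: o_def)
  ultimately have "continuous_map ?C Y (\<lambda>x. H (s (x n), T (cube_proj n x)))"
    using continuous_map_compose[OF continuous_map_pairedI H] by (simp add: o_def)
  then show ?thesis unfolding sing_cube_def prism_cube_def by simp
qed

lemma chain_lin_ext_unit_chain:
  fixes c :: "((nat \<Rightarrow> real) \<Rightarrow> 'a) \<Rightarrow> 'r::comm_ring_1"
  assumes "chain n X c" "\<And>T. sing_cube n X T \<Longrightarrow> sing_cube k Y (F T)"
  shows "chain k Y (lin_ext (\<lambda>T. unit_chain (F T)) c)"
  unfolding chain_def
proof
  show "finite {S. lin_ext (\<lambda>T. unit_chain (F T)) c S \<noteq> 0}"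
    using assms(1) by (intro finite_support_lin_ext) (auto simp: chain_def)
  show "\<forall>S. lin_ext (\<lambda>T. unit_chain (F T)) c S \<noteq> 0 \<longrightarrow> sing_cube k Y S"
  proof (intro allI impI)
    fix S assume "lin_ext (\<lambda>T. unit_chain (F T)) c S \<noteq> 0"
    then have "S \<in> (\<Union>T\<in>{T. c T \<noteq> 0}. {S. unit_chain (F T) S \<noteq> (0::'r)})"
      by (intro subsetD[OF support_lin_ext]) simp
    then obtain T where "c T \<noteq> 0" "unit_chain (F T) S \<noteq> (0::'r)" by blast
    then show "sing_cube k Y S" using assms unfolding chain_def unit_chain_def by (auto split: if_splits)
  qed
qed

lemma chain_chain_map:
  assumes "chain n X c" "continuous_map X Y f"
  shows "chain n Y (chain_map n f c)"
proof -
  have fin: "finite {T. c T \<noteq> 0}" using assms(1) by (simp add: chain_def)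
  show ?thesis
    unfolding chain_map_eq_lin_ext[OF fin]
    using assms by (intro chain_lin_ext_unit_chain sing_cube_push_cube)
qed

lemma cube_bd_eq_sum_unit_chain:
  "cube_bd L m n T S = (\<Sum>j\<in>{1..n}. \<Sum>i\<in>{0..L}. (- 1) ^ (j + 1) * m i * unit_chain (face L n i j T) S)"
  by (simp add: cube_bd_def unit_chain_def)

lemma chain_map_chain_bd:
  assumes w: "finite {T. w T \<noteq> 0}"
  shows "chain_map n f (chain_bd L m (Suc n) w) = chain_bd L m (Suc n) (chain_map (Suc n) f w)"
proof -
  have "chain_map n f (chain_bd L m (Suc n) w)
     = lin_ext (\<lambda>T. unit_chain (push_cube n f T)) (lin_ext (cube_bd L m (Suc n)) w)"
    using w by (simp add: chain_map_eq_lin_ext finite_support_lin_ext finite_support_cube_bd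
        chain_bd_eq_lin_ext)
  also have "\<dots> = lin_ext (\<lambda>T. lin_ext (\<lambda>U. unit_chain (push_cube n f U)) (cube_bd L m (Suc n) T)) w"
    using w finite_support_cube_bd by (rule lin_ext_lin_ext)
  also have "\<dots> = lin_ext (\<lambda>T. cube_bd L m (Suc n) (push_cube (Suc n) f T)) w"
  proof (intro lin_ext_cong ext)
    fix T S
    show "lin_ext (\<lambda>U. unit_chain (push_cube n f U)) (cube_bd L m (Suc n) T) S
        = cube_bd L m (Suc n) (push_cube (Suc n) f T) S"
      unfolding lin_ext_cube_bd cube_bd_eq_sum_unit_chain
      by (intro sum.cong refl) (simp add: face_push_cube)
  qed
  also have "\<dots> = lin_ext (cube_bd L m (Suc n)) (lin_ext (\<lambda>T. unit_chain (push_cube (Suc n) f T)) w)"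
    by (simp add: lin_ext_lin_ext[OF w])
  finally show ?thesis
    using w by (simp add: chain_map_eq_lin_ext chain_bd_eq_lin_ext)
qed

text \<open>The homotopy coordinate of a prism is the last one: its faces j \<le> n are prisms over
  faces of T, its faces j = n + 1 are the time slices of H.\<close>

lemma cube_bd_prism_cube:
  "cube_bd L m (Suc n) (prism_cube n H s T) S =
     lin_ext (\<lambda>U. unit_chain (prism_cube (n - 1) H s U)) (cube_bd L m n T) S
   + (- 1) ^ n * (\<Sum>i\<in>{0..L}. m i * unit_chain (push_cube n (\<lambda>y. H (s (real i / real L), y)) T) S)"
proof -
  have "cube_bd L m (Suc n) (prism_cube n H s T) S =
     (\<Sum>j\<in>{1..n}. \<Sum>i\<in>{0..L}. (- 1) ^ (j + 1) * m i * unit_chain (face L (Suc n) i j (prism_cube n H s T)) S)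
     + (\<Sum>i\<in>{0..L}. (- 1) ^ (Suc n + 1) * m i * unit_chain (face L (Suc n) i (Suc n) (prism_cube n H s T)) S)"
    unfolding cube_bd_eq_sum_unit_chain by (simp add: sum.cl_ivl_Suc)
  also have "(\<Sum>j\<in>{1..n}. \<Sum>i\<in>{0..L}. (- 1) ^ (j + 1) * m i * unit_chain (face L (Suc n) i j (prism_cube n H s T)) S)
     = lin_ext (\<lambda>U. unit_chain (prism_cube (n - 1) H s U)) (cube_bd L m n T) S"
    unfolding lin_ext_cube_bd by (intro sum.cong refl) (simp add: face_prism_cube)
  also have "(\<Sum>i\<in>{0..L}. (- 1) ^ (Suc n + 1) * m i * unit_chain (face L (Suc n) i (Suc n) (prism_cube n H s T)) S)
     = (- 1) ^ n * (\<Sum>i\<in>{0..L}. m i * unit_chain (push_cube n (\<lambda>y. H (s (real i / real L), y)) T) S)"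
    by (auto simp: sum_distrib_left face_prism_cube_last intro!: sum.cong)
  finally show ?thesis .
qed

lemma chain_bd_prism:
  assumes z: "finite {T. z T \<noteq> 0}"
  shows "chain_bd L m (Suc n) (lin_ext (\<lambda>T. unit_chain (prism_cube n H s T)) z) S =
    lin_ext (\<lambda>U. unit_chain (prism_cube (n - 1) H s U)) (chain_bd L m n z) S
    + (- 1) ^ n * (\<Sum>i\<in>{0..L}. m i * chain_map n (\<lambda>y. H (s (real i / real L), y)) z S)"
proof -
  define A where "A = (\<lambda>T. lin_ext (\<lambda>U. unit_chain (prism_cube (n - 1) H s U)) (cube_bd L m n T))"
  define B where "B = (\<lambda>T S. (- 1) ^ n *
      (\<Sum>i\<in>{0..L}. m i * unit_chain (push_cube n (\<lambda>y. H (s (real i / real L), y)) T) S))"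
  have "chain_bd L m (Suc n) (lin_ext (\<lambda>T. unit_chain (prism_cube n H s T)) z) S
      = lin_ext (\<lambda>T. cube_bd L m (Suc n) (prism_cube n H s T)) z S"
    unfolding chain_bd_eq_lin_ext by (subst lin_ext_lin_ext[OF z]) simp_all
  also have "\<dots> = lin_ext (\<lambda>T S. A T S + B T S) z S"
    by (rule arg_cong[where f="\<lambda>\<Phi>. lin_ext \<Phi> z S"]) (simp add: fun_eq_iff cube_bd_prism_cube A_def B_def)
  also have "\<dots> = lin_ext A z S + lin_ext B z S" by (rule lin_ext_add_fun)
  also have "lin_ext A z = lin_ext (\<lambda>U. unit_chain (prism_cube (n - 1) H s U)) (chain_bd L m n z)"
    unfolding A_def chain_bd_eq_lin_ext by (rule lin_ext_lin_ext[OF z finite_support_cube_bd, symmetric])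
  also have "lin_ext B z S = (- 1) ^ n * (\<Sum>i\<in>{0..L}. m i * chain_map n (\<lambda>y. H (s (real i / real L), y)) z S)"
    unfolding B_def chain_map_eq_lin_ext[OF z] lin_ext_def
    by (simp add: sum_distrib_left sum.swap[of _ "{T. z T \<noteq> 0}"] mult.assoc mult.left_commute)
  finally show ?thesis .
qed

section \<open>Boundaries and homology classes\<close>

lemma boundariesI: "chain (Suc n) Y c \<Longrightarrow> chain_bd L m (Suc n) c = b \<Longrightarrow> b \<in> boundaries L m n Y"
  unfolding boundaries_def by blast

lemma zero_in_boundaries:
  fixes m :: "nat \<Rightarrow> 'r::comm_ring_1"
  shows "(\<lambda>S. 0) \<in> boundaries L m n Y"
proof -
  have "chain (Suc n) Y (\<lambda>T. 0 :: 'r)" by (simp add: chain_def)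
  moreover have "chain_bd L m (Suc n) (\<lambda>T. 0) = (\<lambda>S. 0)" by (simp add: chain_bd_eq_lin_ext)
  ultimately show ?thesis by (rule boundariesI)
qed

lemma boundaries_lincomb:
  assumes "b1 \<in> boundaries L m n Y" "b2 \<in> boundaries L m n Y"
  shows "(\<lambda>S. a * b1 S + b2 S) \<in> boundaries L m n Y"
proof -
  obtain c1 where c1: "chain (Suc n) Y c1" "b1 = chain_bd L m (Suc n) c1"
    using assms(1) by (auto simp: boundaries_def)
  obtain c2 where c2: "chain (Suc n) Y c2" "b2 = chain_bd L m (Suc n) c2"
    using assms(2) by (auto simp: boundaries_def)
  have "chain (Suc n) Y (\<lambda>T. a * c1 T + c2 T)"
    unfolding chain_def
  proof
    show "finite {T. a * c1 T + c2 T \<noteq> 0}"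
      by (rule finite_subset[of _ "{T. c1 T \<noteq> 0} \<union> {T. c2 T \<noteq> 0}"])
        (use c1 c2 in \<open>auto simp: chain_def\<close>)
    show "\<forall>T. a * c1 T + c2 T \<noteq> 0 \<longrightarrow> sing_cube (Suc n) Y T"
    proof (intro allI impI)
      fix T assume "a * c1 T + c2 T \<noteq> 0"
      then have "c1 T \<noteq> 0 \<or> c2 T \<noteq> 0" by auto
      then show "sing_cube (Suc n) Y T" using c1 c2 by (auto simp: chain_def)
    qed
  qed
  moreover have "chain_bd L m (Suc n) (\<lambda>T. a * c1 T + c2 T) = (\<lambda>S. a * b1 S + b2 S)"
    unfolding c1 c2 chain_bd_eq_lin_ext
    by (rule ext, rule lin_ext_lincomb) (use c1 c2 in \<open>auto simp: chain_def\<close>)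
  ultimately show ?thesis by (rule boundariesI)
qed

lemma boundaries_scale: "b \<in> boundaries L m n Y \<Longrightarrow> (\<lambda>S. a * b S) \<in> boundaries L m n Y"
  using boundaries_lincomb[OF _ zero_in_boundaries] by simp

lemma boundaries_add:
  "b1 \<in> boundaries L m n Y \<Longrightarrow> b2 \<in> boundaries L m n Y \<Longrightarrow> (\<lambda>S. b1 S + b2 S) \<in> boundaries L m n Y"
  using boundaries_lincomb[of b1 L m n Y b2 1] by simp

lemma boundaries_diff:
  "b1 \<in> boundaries L m n Y \<Longrightarrow> b2 \<in> boundaries L m n Y \<Longrightarrow> (\<lambda>S. b1 S - b2 S) \<in> boundaries L m n Y"
  using boundaries_lincomb[of b2 L m n Y b1 "- 1"] by (simp add: add.commute)

lemma boundaries_sum: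
  assumes "finite K" "\<And>k. k \<in> K \<Longrightarrow> b k \<in> boundaries L m n Y"
  shows "(\<lambda>S. \<Sum>k\<in>K. a k * b k S) \<in> boundaries L m n Y"
  using assms
proof (induction K rule: finite_induct)
  case empty
  then show ?case using zero_in_boundaries by simp
next
  case (insert k K)
  then show ?case using boundaries_lincomb[of "b k" L m n Y _ "a k"] by simp
qed

lemma finite_support_boundaries: "b \<in> boundaries L m n Y \<Longrightarrow> finite {S. b S \<noteq> 0}"
  unfolding boundaries_def chain_bd_eq_lin_ext
  by (auto simp: chain_def intro!: finite_support_lin_ext finite_support_cube_bd)

lemma chain_map_boundaries:
  assumes "continuous_map X Y f" "b \<in> boundaries L m n X"
  shows "chain_map n f b \<in> boundaries L m n Y"
proof -
  obtain w where w: "chain (Suc n) X w" "b = chain_bd L m (Suc n) w"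
    using assms(2) by (auto simp: boundaries_def)
  then have "chain_map n f b = chain_bd L m (Suc n) (chain_map (Suc n) f w)"
    by (simp add: chain_map_chain_bd chain_def)
  then show ?thesis by (rule boundariesI[OF chain_chain_map[OF w(1) assms(1)] sym])
qed

lemma hclassI: "b \<in> boundaries L m n Y \<Longrightarrow> u = (\<lambda>S. v S + b S) \<Longrightarrow> u \<in> hclass L m n Y v"
  unfolding hclass_def by blast

lemma mem_hclass_iff: "u \<in> hclass L m n Y v \<longleftrightarrow> (\<lambda>S. u S - v S) \<in> boundaries L m n Y"
proof
  assume "u \<in> hclass L m n Y v"
  then obtain b where "b \<in> boundaries L m n Y" "u = (\<lambda>S. v S + b S)"
    unfolding hclass_def by blast
  then show "(\<lambda>S. u S - v S) \<in> boundaries L m n Y" by simp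
next
  assume "(\<lambda>S. u S - v S) \<in> boundaries L m n Y"
  then show "u \<in> hclass L m n Y v" by (rule hclassI) simp
qed

lemma hclass_refl: "u \<in> hclass L m n Y u"
  using zero_in_boundaries by (simp add: mem_hclass_iff)

lemma hclass_eq_iff:
  "hclass L m n Y u = hclass L m n Y v \<longleftrightarrow> (\<lambda>S. u S - v S) \<in> boundaries L m n Y"
proof
  assume eq: "hclass L m n Y u = hclass L m n Y v"
  have "u \<in> hclass L m n Y v"
    using hclass_refl[of u L m n Y] unfolding eq .
  then show "(\<lambda>S. u S - v S) \<in> boundaries L m n Y"
    unfolding mem_hclass_iff .
next
  assume d: "(\<lambda>S. u S - v S) \<in> boundaries L m n Y"
  show "hclass L m n Y u = hclass L m n Y v"
  proof (rule set_eqI)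
    fix w
    show "w \<in> hclass L m n Y u \<longleftrightarrow> w \<in> hclass L m n Y v"
    proof
      assume "w \<in> hclass L m n Y u"
      then have "(\<lambda>S. (w S - u S) + (u S - v S)) \<in> boundaries L m n Y"
        unfolding mem_hclass_iff by (rule boundaries_add[OF _ d])
      then show "w \<in> hclass L m n Y v" unfolding mem_hclass_iff by simp
    next
      assume "w \<in> hclass L m n Y v"
      then have "(\<lambda>S. (w S - v S) - (u S - v S)) \<in> boundaries L m n Y"
        unfolding mem_hclass_iff by (rule boundaries_diff[OF _ d])
      then show "w \<in> hclass L m n Y u" unfolding mem_hclass_iff by simp
    qed
  qed
qed

lemma hom_map_hclass:
  "\<exists>b\<in>boundaries L m n X. \<forall>Y f.
     hom_map L m n Y f (hclass L m n X z) = hclass L m n Y (chain_map n f (\<lambda>S. z S + b S))"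
proof -
  define z' where "z' = (SOME z'. z' \<in> hclass L m n X z)"
  have "z' \<in> hclass L m n X z"
    unfolding z'_def by (rule someI[of _ z]) (rule hclass_refl)
  then have "(\<lambda>S. z' S - z S) \<in> boundaries L m n X" by (simp add: mem_hclass_iff)
  then show ?thesis
    unfolding hom_map_def z'_def[symmetric] by (intro bexI[of _ "\<lambda>S. z' S - z S"]) simp_all
qed

section \<open>Sufficiency of the unit ideal\<close>

definition tent :: "nat \<Rightarrow> nat \<Rightarrow> real \<Rightarrow> real" where
  "tent L k t = max 0 (1 - \<bar>real L * t - real k\<bar>)"

lemma continuous_map_tent: "continuous_map euclideanreal euclideanreal (tent L k)"
  unfolding continuous_map_iff_continuous2 tent_def by (intro continuous_intros)

lemma tent_in_unit_interval: "tent L k t \<in> {0..1}"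
  unfolding tent_def by auto

lemma tent_at_node:
  assumes "i \<le> L" "k \<le> L"
  shows "tent L k (real i / real L) = (if i = k then 1 else 0)"
proof (cases "L = 0")
  case False
  then have "real L * (real i / real L) = real i" by simp
  then show ?thesis unfolding tent_def by auto
qed (use assms in \<open>simp add: tent_def\<close>)

lemma sum_mult_if_diff:
  fixes c :: "'k \<Rightarrow> 'r::comm_ring_1"
  assumes "finite K" "k \<in> K"
  shows "(\<Sum>i\<in>K. c i * (if i = k then a else b)) - (\<Sum>i\<in>K. c i * b) = c k * (a - b)"
proof -
  have "(\<Sum>i\<in>K. c i * (if i = k then a else b)) - (\<Sum>i\<in>K. c i * b)
      = (\<Sum>i\<in>K. c i * (if i = k then a else b) - c i * b)"
    by (simp only: sum_subtractf)
  also have "\<dots> = (\<Sum>i\<in>K. if i = k then c i * (a - b) else 0)"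
    by (rule sum.cong) (auto simp: right_diff_distrib)
  also have "\<dots> = c k * (a - b)" using assms by simp
  finally show ?thesis .
qed

lemma weighted_slices_in_boundaries:
  fixes m :: "nat \<Rightarrow> 'r::comm_ring_1"
  assumes z: "chain n X z" "chain_bd L m n z = (\<lambda>S. 0)"
    and H: "continuous_map (prod_topology (top_of_set {0..1}) X) Y H"
    and s: "continuous_map euclideanreal euclideanreal s" "\<And>t. s t \<in> {0..1}"
  shows "(\<lambda>S. \<Sum>i\<in>{0..L}. m i * chain_map n (\<lambda>y. H (s (real i / real L), y)) z S)
           \<in> boundaries L m n Y"
proof -
  let ?P = "lin_ext (\<lambda>T. unit_chain (prism_cube n H s T)) z"
  have "chain (Suc n) Y ?P"
    using z(1) by (rule chain_lin_ext_unit_chain) (rule sing_cube_prism_cube[OF _ H s])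
  then have "chain_bd L m (Suc n) ?P \<in> boundaries L m n Y" by (rule boundariesI) (rule refl)
  then have "(\<lambda>S. (- 1) ^ n * chain_bd L m (Suc n) ?P S) \<in> boundaries L m n Y"
    by (rule boundaries_scale)
  moreover have "(- 1) ^ n * (- 1) ^ n = (1 :: 'r)" by (simp flip: power_add)
  ultimately show ?thesis
    using z by (simp add: chain_bd_prism chain_def mult.assoc[symmetric])
qed

lemma weighted_homotopy_diff_in_boundaries:
  fixes H :: "real \<times> 'a \<Rightarrow> 'b" and X :: "'a topology"
  assumes z: "chain n X z" "chain_bd L m n z = (\<lambda>S. 0)"
    and H: "continuous_map (prod_topology (top_of_set {0..1}) X) Y H"
      "\<And>x. H (0, x) = f x" "\<And>x. H (1, x) = g x"
    and k: "k \<le> L"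
  shows "(\<lambda>S. m k * (chain_map n g z S - chain_map n f z S)) \<in> boundaries L m n Y"
proof -
  have "(\<lambda>S. \<Sum>i\<in>{0..L}. m i * chain_map n (\<lambda>y. H (tent L k (real i / real L), y)) z S)
          \<in> boundaries L m n Y"
    using z H(1) continuous_map_tent tent_in_unit_interval by (rule weighted_slices_in_boundaries)
  moreover have "(\<Sum>i\<in>{0..L}. m i * chain_map n (\<lambda>y. H (tent L k (real i / real L), y)) z S)
      = (\<Sum>i\<in>{0..L}. m i * (if i = k then chain_map n g z S else chain_map n f z S))" for S
    by (intro sum.cong refl) (use k in \<open>auto simp: tent_at_node H(2,3)\<close>)
  moreover have "(\<lambda>S. \<Sum>i\<in>{0..L}. m i * chain_map n f z S) \<in> boundaries L m n Y"
    using weighted_slices_in_boundaries[OF z H(1), of "\<lambda>_. 0"] by (simp add: H(2))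
  ultimately have "(\<lambda>S. (\<Sum>i\<in>{0..L}. m i * (if i = k then chain_map n g z S else chain_map n f z S))
      - (\<Sum>i\<in>{0..L}. m i * chain_map n f z S)) \<in> boundaries L m n Y"
    by (simp add: boundaries_diff)
  then show ?thesis using k by (simp add: sum_mult_if_diff)
qed

lemma homotopic_chain_map_diff_in_boundaries:
  fixes X :: "'a topology" and Y :: "'b topology"
  assumes unit: "(\<Sum>k\<in>{0..L}. r k * m k) = 1"
    and z: "chain n X z" "chain_bd L m n z = (\<lambda>S. 0)"
    and hom: "homotopic_with (\<lambda>_. True) X Y f g"
  shows "(\<lambda>S. chain_map n g z S - chain_map n f z S) \<in> boundaries L m n Y"
proof -
  obtain H :: "real \<times> 'a \<Rightarrow> 'b" where H: "continuous_map (prod_topology (top_of_set {0..1}) X) Y H"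
      "\<And>x. H (0, x) = f x" "\<And>x. H (1, x) = g x"
    using hom unfolding homotopic_with_def by blast
  have "(\<lambda>S. \<Sum>k\<in>{0..L}. r k * (m k * (chain_map n g z S - chain_map n f z S)))
          \<in> boundaries L m n Y"
    by (rule boundaries_sum) (use weighted_homotopy_diff_in_boundaries[OF z H] in auto)
  moreover have "(\<Sum>k\<in>{0..L}. r k * (m k * d)) = (\<Sum>k\<in>{0..L}. r k * m k) * d" for d
    by (simp add: sum_distrib_right mult.assoc)
  ultimately show ?thesis by (simp add: unit)
qed

lemma homotopy_axiom_if_unit_ideal:
  fixes m :: "nat \<Rightarrow> 'r::comm_ring_1"
  assumes "\<exists>r. (\<Sum>k\<in>{0..L}. r k * m k) = 1"
  shows "homotopy_axiom TYPE('a) TYPE('b) L m"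
  unfolding homotopy_axiom_def
proof (intro allI impI ballI)
  fix X :: "'a topology" and Y :: "'b topology" and f g n C
  assume hom: "homotopic_with (\<lambda>_. True) X Y f g" and "C \<in> homology L m n X"
  then obtain z where z: "chain n X z" "chain_bd L m n z = (\<lambda>S. 0)" and C: "C = hclass L m n X z"
    unfolding homology_def cycles_def by blast
  obtain b where b: "b \<in> boundaries L m n X"
    and hom_map: "\<And>(Y :: 'b topology) f.
      hom_map L m n Y f (hclass L m n X z) = hclass L m n Y (chain_map n f (\<lambda>S. z S + b S))"
    using hom_map_hclass by blast
  obtain r where r: "(\<Sum>k\<in>{0..L}. r k * m k) = 1" using assms by blast
  have cont: "continuous_map X Y f" "continuous_map X Y g"
    using homotopic_with_imp_continuous_maps[OF hom] by simp_all
  have fin: "finite {T. z T \<noteq> 0}" "finite {T. b T \<noteq> 0}"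
    using z(1) b by (simp_all add: chain_def finite_support_boundaries)
  have "(\<lambda>S. (chain_map n f b S - chain_map n g b S) - (chain_map n g z S - chain_map n f z S))
          \<in> boundaries L m n Y"
    using boundaries_diff[OF boundaries_diff[OF chain_map_boundaries[OF cont(1) b]
        chain_map_boundaries[OF cont(2) b]] homotopic_chain_map_diff_in_boundaries[OF r z hom]] .
  moreover have "(\<lambda>S. (chain_map n f b S - chain_map n g b S) - (chain_map n g z S - chain_map n f z S))
      = (\<lambda>S. chain_map n f (\<lambda>S. z S + b S) S - chain_map n g (\<lambda>S. z S + b S) S)"
    unfolding chain_map_add[OF fin] by (rule ext) (simp add: algebra_simps)
  ultimately have "(\<lambda>S. chain_map n f (\<lambda>S. z S + b S) S - chain_map n g (\<lambda>S. z S + b S) S)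
               \<in> boundaries L m n Y" by simp
  then show "hom_map L m n Y f C = hom_map L m n Y g C"
    by (simp add: C hom_map hclass_eq_iff)
qed

section \<open>Necessity of the unit ideal\<close>

interpretation ideal: module "(*) :: 'a::comm_ring_1 \<Rightarrow> 'a \<Rightarrow> 'a"
  by unfold_locales (simp_all add: algebra_simps)

text \<open>Here scale_scale reassociates products and loops against mult.assoc.\<close>
lemmas [simp del] = ideal.scale_scale

lemma ideal_span_image_lincomb:
  fixes m :: "nat \<Rightarrow> 'r::comm_ring_1"
  assumes "finite K" "x \<in> ideal.span (m ` K)"
  shows "\<exists>r. (\<Sum>k\<in>K. r k * m k) = x"
  using assms(2)
proof (induction rule: ideal.span_induct_alt)
  case base
  show ?case by (intro exI[of _ "\<lambda>k. 0"]) simp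
next
  case (step c x y)
  then obtain j r where j: "j \<in> K" "x = m j" and r: "(\<Sum>k\<in>K. r k * m k) = y" by blast
  have "(\<Sum>k\<in>K. (r k + (if k = j then c else 0)) * m k) = c * x + y"
    using j r assms(1) by (simp add: distrib_right sum.distrib if_distrib[of "\<lambda>a. a * _"] sum.delta)
  then show ?case by (rule exI[of _ "\<lambda>k. r k + (if k = j then c else 0)"])
qed

lemma boundary_coeff_in_ideal_span:
  fixes m :: "nat \<Rightarrow> 'r::comm_ring_1"
  assumes "b \<in> boundaries L m n Y"
  shows "b S \<in> ideal.span (m ` {0..L})"
proof -
  have m: "c * m i * a \<in> ideal.span (m ` {0..L})" if "i \<in> {0..L}" for c i a
  proof -
    have "m i \<in> ideal.span (m ` {0..L})" using that by (intro ideal.span_base) simp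
    then show ?thesis using ideal.span_scale[of "m i" _ "c * a"] by (simp add: ac_simps)
  qed
  have "cube_bd L m (Suc n) T S \<in> ideal.span (m ` {0..L})" for T
    unfolding cube_bd_def by (intro ideal.span_sum m) simp
  moreover obtain c where "b = chain_bd L m (Suc n) c"
    using assms by (auto simp: boundaries_def)
  ultimately show ?thesis
    unfolding chain_bd_eq_lin_ext lin_ext_def by (auto intro!: ideal.span_sum ideal.span_scale)
qed

lemma unit_ideal_if_homotopy_axiom:
  fixes m :: "nat \<Rightarrow> 'r::comm_ring_1"
  assumes ax: "homotopy_axiom TYPE(real) TYPE(real) L m"
  shows "\<exists>r. (\<Sum>k\<in>{0..L}. r k * m k) = 1"
proof -
  define P :: "(nat \<Rightarrow> real) \<Rightarrow> real" where "P = restrict (\<lambda>_. 0) (unit_cube 0)"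
  define z :: "((nat \<Rightarrow> real) \<Rightarrow> real) \<Rightarrow> 'r" where "z = unit_chain P"
  have "sing_cube 0 euclideanreal P"
    unfolding sing_cube_def P_def by (simp add: continuous_map_const)
  then have "chain 0 euclideanreal z"
    unfolding chain_def z_def by (simp add: unit_chain_def)
  then have C: "hclass L m 0 euclideanreal z \<in> homology L m 0 euclideanreal"
    unfolding homology_def cycles_def by (intro imageI[of z]) (simp add: chain_bd_def)
  have hom: "homotopic_with (\<lambda>_. True) euclideanreal euclideanreal (\<lambda>_. 0) (\<lambda>_. 1 :: real)"
    unfolding homotopic_with_def
  proof (intro exI[of _ fst] conjI)
    show "continuous_map (prod_topology (top_of_set {0..1}) euclideanreal) euclideanreal fst"
      using continuous_map_fst continuous_map_into_fulltopology by blast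
  qed auto
  obtain b where b: "b \<in> boundaries L m 0 euclideanreal" and hom_map: "\<forall>(Y :: real topology) f.
      hom_map L m 0 Y f (hclass L m 0 euclideanreal z) = hclass L m 0 Y (chain_map 0 f (\<lambda>S. z S + b S))"
    using hom_map_hclass by blast
  have "hom_map L m 0 euclideanreal (\<lambda>_. 0) (hclass L m 0 euclideanreal z)
      = hom_map L m 0 euclideanreal (\<lambda>_. 1) (hclass L m 0 euclideanreal z)"
    using ax hom C unfolding homotopy_axiom_def by blast
  then have "(\<lambda>S. chain_map 0 (\<lambda>_. 0) (\<lambda>S. z S + b S) S - chain_map 0 (\<lambda>_. 1) (\<lambda>S. z S + b S) S)
      \<in> boundaries L m 0 euclideanreal"
    by (simp add: hom_map hclass_eq_iff)
  then have diff: "chain_map 0 (\<lambda>_. 0) (\<lambda>S. z S + b S) P - chain_map 0 (\<lambda>_. 1) (\<lambda>S. z S + b S) P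
      \<in> ideal.span (m ` {0..L})"
    by (rule boundary_coeff_in_ideal_span)
  have fin: "finite {T. z T \<noteq> 0}" "finite {T. b T \<noteq> 0}"
    using b by (simp_all add: z_def finite_support_boundaries)
  have "push_cube 0 (\<lambda>_. 0) P = P"
    by (simp add: push_cube_def P_def o_def)
  then have "chain_map 0 (\<lambda>_. 0) z P = 1"
    unfolding z_def chain_map_unit_chain by (simp add: unit_chain_def)
  moreover have "chain_map 0 (\<lambda>_. 0) b P = (\<Sum>T\<in>{T. b T \<noteq> 0}. b T)"
    unfolding P_def by (rule chain_map_const)
  ultimately have f: "chain_map 0 (\<lambda>_. 0) (\<lambda>S. z S + b S) P = 1 + (\<Sum>T\<in>{T. b T \<noteq> 0}. b T)"
    by (simp add: chain_map_add[OF fin])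
  have g: "chain_map 0 (\<lambda>_. 1) (\<lambda>S. z S + b S) P = 0"
  proof (rule chain_map_outside_image)
    fix T
    show "push_cube 0 (\<lambda>_. 1) T \<noteq> P"
    proof
      assume "push_cube 0 (\<lambda>_. 1) T = P"
      then have "push_cube 0 (\<lambda>_. 1) T (\<lambda>_. 0) = P (\<lambda>_. 0)" by (rule fun_cong)
      then show False by (simp add: push_cube_def P_def unit_cube_def)
    qed
  qed
  with diff f have "1 + (\<Sum>T\<in>{T. b T \<noteq> 0}. b T) \<in> ideal.span (m ` {0..L})"
    by simp
  moreover have "(\<Sum>T\<in>{T. b T \<noteq> 0}. b T) \<in> ideal.span (m ` {0..L})"
    by (intro ideal.span_sum boundary_coeff_in_ideal_span[OF b])
  ultimately have "(1 + (\<Sum>T\<in>{T. b T \<noteq> 0}. b T)) - (\<Sum>T\<in>{T. b T \<noteq> 0}. b T)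
      \<in> ideal.span (m ` {0..L})"
    by (rule ideal.span_diff)
  then have "1 \<in> ideal.span (m ` {0..L})" by simp
  then show ?thesis by (rule ideal_span_image_lincomb[rotated]) simp
qed

lemma bezout_Gcd_int:
  fixes mz :: "nat \<Rightarrow> int"
  shows "\<exists>r. (\<Sum>k\<in>{0..L}. r k * mz k) = Gcd (mz ` {0..L})"
proof (induction L)
  case 0
  show ?case by (rule exI[of _ "\<lambda>k. sgn (mz 0)"]) (simp add: abs_sgn)
next
  case (Suc L)
  then obtain r where r: "(\<Sum>k\<in>{0..L}. r k * mz k) = Gcd (mz ` {0..L})" by blast
  obtain u v where uv: "u * mz (Suc L) + v * Gcd (mz ` {0..L}) = gcd (mz (Suc L)) (Gcd (mz ` {0..L}))"
    using bezout_int by blast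
  have "(\<Sum>k\<in>{0..Suc L}. (if k = Suc L then u else v * r k) * mz k)
      = u * mz (Suc L) + v * (\<Sum>k\<in>{0..L}. r k * mz k)"
    by (simp add: atLeast0_atMost_Suc sum_distrib_left mult.assoc)
  also have "\<dots> = Gcd (mz ` {0..Suc L})"
    using uv by (simp add: r atLeast0_atMost_Suc Gcd_insert)
  finally show ?case by (rule exI[of _ "\<lambda>k. if k = Suc L then u else v * r k"])
qed

theorem mainTheorem4:
  fixes L :: nat and m :: "nat \<Rightarrow> 'r::comm_ring_1" and mz :: "nat \<Rightarrow> int"
  shows "((\<exists>r. (\<Sum>k\<in>{0..L}. r k * m k) = 1) \<longrightarrow> homotopy_axiom TYPE('a) TYPE('b) L m)
       \<and> (homotopy_axiom TYPE(real) TYPE(real) L m \<longrightarrow> (\<exists>r. (\<Sum>k\<in>{0..L}. r k * m k) = 1))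
       \<and> (Gcd (mz ` {0..L}) = 1 \<longrightarrow> homotopy_axiom TYPE('c) TYPE('d) L mz)
       \<and> (homotopy_axiom TYPE(real) TYPE(real) L mz \<longrightarrow> Gcd (mz ` {0..L}) = 1)"
proof (intro conjI impI)
  show "homotopy_axiom TYPE('a) TYPE('b) L m" if "\<exists>r. (\<Sum>k\<in>{0..L}. r k * m k) = 1"
    using that by (rule homotopy_axiom_if_unit_ideal)
  show "\<exists>r. (\<Sum>k\<in>{0..L}. r k * m k) = 1" if "homotopy_axiom TYPE(real) TYPE(real) L m"
    using that by (rule unit_ideal_if_homotopy_axiom)
  show "homotopy_axiom TYPE('c) TYPE('d) L mz" if "Gcd (mz ` {0..L}) = 1"
    using that bezout_Gcd_int[of mz L] by (intro homotopy_axiom_if_unit_ideal) simp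
  show "Gcd (mz ` {0..L}) = 1" if ax: "homotopy_axiom TYPE(real) TYPE(real) L mz"
  proof -
    obtain r where "(\<Sum>k\<in>{0..L}. r k * mz k) = 1"
      using unit_ideal_if_homotopy_axiom[OF ax] by blast
    moreover have "Gcd (mz ` {0..L}) dvd (\<Sum>k\<in>{0..L}. r k * mz k)"
      by (intro dvd_sum dvd_mult Gcd_dvd) auto
    ultimately show ?thesis by simp
  qed
qed

end
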